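(* For every integer $d\ge 2$ and every $\theta>0$, in the snowdrift game described in the context, $F$ is strictly decreasing in $\sigma_c^2$, strictly decreasing in $\sigma_b^2$, and strictly increasing in $\sigma_{bc}$ (each time with the remaining parameters held fixed).
   Context: For integers $0\le k\le n$ and $\theta>0$ let $\psi_n^k=\frac{\prod_{i=1}^{k}(\theta+i-1)\prod_{j=1}^{n-k}(\theta+j-1)}{\prod_{l=1}^{n}(2\theta+l-1)}$ (empty products equal $1$). For real arrays $\mu_{C,k},\mu_{D,k},\sigma_{CC,kl},\sigma_{CD,kl},\sigma_{DD,kl}$ ($k,l=0,\ldots,d-1$) define $$F=\sum_{k=0}^{d-1}\binom{d-1}{k}\psi_{d+1}^{k+1}(\mu_{C,k}-\mu_{D,k})+\sum_{k,l=0}^{d-1}\binom{d-1}{k}\binom{d-1}{l}\Big[-\psi_{2d+1}^{k+l+2}(\sigma_{CC,kl}-\sigma_{CD,kl})+\psi_{2d+1}^{k+l+1}(\sigma_{DD,kl}-\sigma_{CD,kl})\Big].$$ These arrays are the scaled means and second moments of the payoffs $a_k$ (cooperator) and $b_k$ (defector) with $k$ cooperating partners in a group of size $d$. In the paper's large-population weak-selection approximation, the average abundance of $C$ is $\tfrac12+\tfrac{\delta(1-u)}{u}F$; increasing $F$ means increasing the average abundance of $C$. Snowdrift game: random benefit $b$ and cost $c$ have scaled moments $\mu_b,\mu_c,\sigma_b^2,\sigma_c^2,\sigma_{bc}$ (i.e. $E[b]=\mu_b\delta+o(\delta)$, etc., with $E[bc]=\sigma_{bc}\delta+o(\delta)$).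 The payoffs are $a_k=b-\frac{c}{k+1}$ for $k=0,\ldots,d-1$, $b_0=0$, and $b_k=b$ for $k\ge1$. Hence $\mu_{C,k}=\mu_b-\frac{\mu_c}{k+1}$, $\mu_{D,k}=\mu_b\mathbf 1_{\{k\ne0\}}$, $\sigma_{CC,kl}=\sigma_b^2-\big(\frac1{k+1}+\frac1{l+1}\big)\sigma_{bc}+\frac{\sigma_c^2}{(k+1)(l+1)}$, $\sigma_{DD,kl}=\sigma_b^2\mathbf 1_{\{k\ne0,\,l\ne0\}}$, $\sigma_{CD,kl}=\big(\sigma_b^2-\frac{\sigma_{bc}}{k+1}\big)\mathbf 1_{\{l\ne0\}}$. *)

theory Defs
  imports Complex_Main
begin

definition psi :: "real \<Rightarrow> nat \<Rightarrow> nat \<Rightarrow> real" where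
  "psi \<theta> n k =
     (\<Prod>i=1..k. \<theta> + real i - 1) * (\<Prod>j=1..n-k. \<theta> + real j - 1)
     / (\<Prod>l=1..n. 2*\<theta> + real l - 1)"

definition Fgen :: "nat \<Rightarrow> real \<Rightarrow> (nat \<Rightarrow> real) \<Rightarrow> (nat \<Rightarrow> real)
    \<Rightarrow> (nat \<Rightarrow> nat \<Rightarrow> real) \<Rightarrow> (nat \<Rightarrow> nat \<Rightarrow> real) \<Rightarrow> (nat \<Rightarrow> nat \<Rightarrow> real) \<Rightarrow> real" where
  "Fgen d \<theta> muC muD sCC sCD sDD =
     (\<Sum>k=0..d-1. real (d-1 choose k) * psi \<theta> (d+1) (k+1) * (muC k - muD k))
   + (\<Sum>k=0..d-1. \<Sum>l=0..d-1. real (d-1 choose k) * real (d-1 choose l) *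
        (- psi \<theta> (2*d+1) (k+l+2) * (sCC k l - sCD k l)
         + psi \<theta> (2*d+1) (k+l+1) * (sDD k l - sCD k l)))"

definition sd_muC :: "real \<Rightarrow> real \<Rightarrow> nat \<Rightarrow> real" where
  "sd_muC mub muc k = mub - muc / real (k+1)"
definition sd_muD :: "real \<Rightarrow> nat \<Rightarrow> real" where
  "sd_muD mub k = (if k \<noteq> 0 then mub else 0)"
definition sd_sCC :: "real \<Rightarrow> real \<Rightarrow> real \<Rightarrow> nat \<Rightarrow> nat \<Rightarrow> real" where
  "sd_sCC sb2 sc2 sbc k l = sb2 - (1/real (k+1) + 1/real (l+1)) * sbc
      + sc2 / (real (k+1) * real (l+1))"
definition sd_sDD :: "real \<Rightarrow> nat \<Rightarrow> nat \<Rightarrow> real" where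
  "sd_sDD sb2 k l = (if k \<noteq> 0 \<and> l \<noteq> 0 then sb2 else 0)"
definition sd_sCD :: "real \<Rightarrow> real \<Rightarrow> nat \<Rightarrow> nat \<Rightarrow> real" where
  "sd_sCD sb2 sbc k l = (if l \<noteq> 0 then sb2 - sbc / real (k+1) else 0)"

definition F_snow :: "nat \<Rightarrow> real \<Rightarrow> real \<Rightarrow> real \<Rightarrow> real \<Rightarrow> real \<Rightarrow> real \<Rightarrow> real" where
  "F_snow d \<theta> mub muc sb2 sc2 sbc =
     Fgen d \<theta> (sd_muC mub muc) (sd_muD mub) (sd_sCC sb2 sc2 sbc) (sd_sCD sb2 sbc) (sd_sDD sb2)"

end

theory Submission
  imports Defs
begin

text \<open>The second-moment arrays of the snowdrift game are affine in
  \<open>(\<sigma>\<^sub>b\<^sup>2, \<sigma>\<^sub>c\<^sup>2, \<sigma>\<^sub>b\<^sub>c)\<close>, so \<open>F\<close> is affine in these three parameters and only the signs of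
  its three slopes matter. All \<open>\<psi>\<close> and binomial weights are positive, so the
  \<open>\<sigma>\<^sub>c\<^sup>2\<close>-slope is a sum of negative terms and the \<open>\<sigma>\<^sub>b\<^sub>c\<close>-slope a sum of positive terms,
  while the \<open>\<sigma>\<^sub>b\<^sup>2\<close>-slope is a sum of nonpositive terms whose \<open>(k,l) = (0,0)\<close> term is
  negative.\<close>

lemma psi_pos:
  assumes "\<theta> > 0"
  shows "psi \<theta> n k > 0"
  unfolding psi_def using assms by (intro divide_pos_pos mult_pos_pos prod_pos) auto

lemma binomial_weight_pos:
  assumes "k \<le> n" "l \<le> n"
  shows "real (n choose k) * real (n choose l) > 0"
  using assms by simp

definition F_snow_slope_sb2 :: "nat \<Rightarrow> real \<Rightarrow> real" where
  "F_snow_slope_sb2 d \<theta> = (\<Sum>k=0..d-1. \<Sum>l=0..d-1. real (d-1 choose k) * real (d-1 choose l) *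
     (- psi \<theta> (2*d+1) (k+l+2) * of_bool (l = 0) - psi \<theta> (2*d+1) (k+l+1) * of_bool (k = 0 \<and> l \<noteq> 0)))"

definition F_snow_slope_sc2 :: "nat \<Rightarrow> real \<Rightarrow> real" where
  "F_snow_slope_sc2 d \<theta> = (\<Sum>k=0..d-1. \<Sum>l=0..d-1. real (d-1 choose k) * real (d-1 choose l) *
     (- psi \<theta> (2*d+1) (k+l+2) / (real (k+1) * real (l+1))))"

definition F_snow_slope_sbc :: "nat \<Rightarrow> real \<Rightarrow> real" where
  "F_snow_slope_sbc d \<theta> = (\<Sum>k=0..d-1. \<Sum>l=0..d-1. real (d-1 choose k) * real (d-1 choose l) *
     (psi \<theta> (2*d+1) (k+l+2) * (of_bool (l = 0) / real (k+1) + 1 / real (l+1))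
      + psi \<theta> (2*d+1) (k+l+1) * of_bool (l \<noteq> 0) / real (k+1)))"

lemma F_snow_affine:
  "F_snow d \<theta> mub muc sb2 sc2 sbc = F_snow d \<theta> mub muc 0 0 0
     + sb2 * F_snow_slope_sb2 d \<theta> + sc2 * F_snow_slope_sc2 d \<theta> + sbc * F_snow_slope_sbc d \<theta>"
proof -
  have summand: "w * (- psi \<theta> (2*d+1) (k+l+2) * (sd_sCC sb2 sc2 sbc k l - sd_sCD sb2 sbc k l)
       + psi \<theta> (2*d+1) (k+l+1) * (sd_sDD sb2 k l - sd_sCD sb2 sbc k l))
     = w * (- psi \<theta> (2*d+1) (k+l+2) * (sd_sCC 0 0 0 k l - sd_sCD 0 0 k l)
       + psi \<theta> (2*d+1) (k+l+1) * (sd_sDD 0 k l - sd_sCD 0 0 k l))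
     + sb2 * (w * (- psi \<theta> (2*d+1) (k+l+2) * of_bool (l = 0)
                   - psi \<theta> (2*d+1) (k+l+1) * of_bool (k = 0 \<and> l \<noteq> 0)))
     + sc2 * (w * (- psi \<theta> (2*d+1) (k+l+2) / (real (k+1) * real (l+1))))
     + sbc * (w * (psi \<theta> (2*d+1) (k+l+2) * (of_bool (l = 0) / real (k+1) + 1 / real (l+1))
                   + psi \<theta> (2*d+1) (k+l+1) * of_bool (l \<noteq> 0) / real (k+1)))"
    for w :: real and k l
    unfolding sd_sCC_def sd_sCD_def sd_sDD_def
    by (cases "l = 0"; cases "k = 0") (simp_all add: divide_inverse algebra_simps)
  show ?thesis
    unfolding F_snow_def Fgen_def F_snow_slope_sb2_def F_snow_slope_sc2_def F_snow_slope_sbc_def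
    by (simp only: summand sum.distrib sum_distrib_left[symmetric])
qed

lemma sum_neg_ex1:
  fixes f :: "'a \<Rightarrow> 'b::ordered_cancel_comm_monoid_add"
  assumes "finite A" "\<And>x. x \<in> A \<Longrightarrow> f x \<le> 0" "a \<in> A" "f a < 0"
  shows "sum f A < 0"
  using sum_strict_mono_ex1[of A f "\<lambda>_. 0"] assms by auto

lemma F_snow_slope_sb2_neg:
  assumes "\<theta> > 0"
  shows "F_snow_slope_sb2 d \<theta> < 0"
proof -
  let ?c = "\<lambda>k l. real (d-1 choose k) * real (d-1 choose l) *
     (- psi \<theta> (2*d+1) (k+l+2) * of_bool (l = 0) - psi \<theta> (2*d+1) (k+l+1) * of_bool (k = 0 \<and> l \<noteq> 0))"
  have nonpos: "?c k l \<le> 0" if "k \<le> d - 1" "l \<le> d - 1" for k l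
    using binomial_weight_pos[OF that] psi_pos[OF assms, of "2*d+1"]
    by (intro mult_nonneg_nonpos) (auto simp: less_imp_le)
  have corner: "?c 0 0 < 0"
    using binomial_weight_pos[of 0 "d-1" 0] psi_pos[OF assms] by (intro mult_pos_neg) auto
  have row0: "(\<Sum>l=0..d-1. ?c 0 l) < 0"
    using corner by (intro sum_neg_ex1[where a=0] nonpos) auto
  have rows: "(\<Sum>l=0..d-1. ?c k l) \<le> 0" if "k \<in> {0..d-1}" for k
    using that by (intro sum_nonpos nonpos) simp_all
  have "(\<Sum>k=0..d-1. \<Sum>l=0..d-1. ?c k l) < 0"
    by (rule sum_neg_ex1[of _ "\<lambda>k. \<Sum>l=0..d-1. ?c k l", OF _ rows _ row0]) simp_all
  then show ?thesis unfolding F_snow_slope_sb2_def .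
qed

lemma F_snow_slope_sc2_neg:
  assumes "\<theta> > 0"
  shows "F_snow_slope_sc2 d \<theta> < 0"
  unfolding F_snow_slope_sc2_def using binomial_weight_pos psi_pos[OF assms]
  by (intro sum_neg_ex1[where a=0] sum_nonpos mult_pos_neg divide_neg_pos less_imp_le) auto

lemma F_snow_slope_sbc_pos:
  assumes "\<theta> > 0"
  shows "F_snow_slope_sbc d \<theta> > 0"
proof -
  have "psi \<theta> (2*d+1) (k+l+2) * (of_bool (l = 0) / real (k+1) + 1 / real (l+1))
      + psi \<theta> (2*d+1) (k+l+1) * of_bool (l \<noteq> 0) / real (k+1) > 0" for k l
    using psi_pos[OF assms]
    by (intro add_pos_nonneg mult_pos_pos add_nonneg_pos) (auto simp: less_imp_le)
  then show ?thesis
    unfolding F_snow_slope_sbc_def using binomial_weight_pos by (intro sum_pos mult_pos_pos) auto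
qed

theorem mainTheorem6:
  fixes d :: nat and \<theta> mub muc sb2 sc2 sbc :: real
  assumes "d \<ge> 2" and "\<theta> > 0"
  shows "(\<forall>x y. x < y \<longrightarrow> F_snow d \<theta> mub muc sb2 y sbc < F_snow d \<theta> mub muc sb2 x sbc)
       \<and> (\<forall>x y. x < y \<longrightarrow> F_snow d \<theta> mub muc y sc2 sbc < F_snow d \<theta> mub muc x sc2 sbc)
       \<and> (\<forall>x y. x < y \<longrightarrow> F_snow d \<theta> mub muc sb2 sc2 x < F_snow d \<theta> mub muc sb2 sc2 y)"
proof (intro conjI allI impI)
  \<comment> \<open>used only instantiated: its right-hand side is again an instance of its left-hand side\<close>
  note affine = F_snow_affine[of d \<theta> mub muc]
  have slope_sb2: "F_snow_slope_sb2 d \<theta> < 0"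
    and slope_sc2: "F_snow_slope_sc2 d \<theta> < 0"
    and slope_sbc: "F_snow_slope_sbc d \<theta> > 0"
    using F_snow_slope_sb2_neg F_snow_slope_sc2_neg F_snow_slope_sbc_pos assms(2)
    by blast+
  fix x y :: real
  assume "x < y"
  then show "F_snow d \<theta> mub muc sb2 y sbc < F_snow d \<theta> mub muc sb2 x sbc"
    using slope_sc2 by (simp only: affine[of sb2 y sbc] affine[of sb2 x sbc]) simp
  show "F_snow d \<theta> mub muc y sc2 sbc < F_snow d \<theta> mub muc x sc2 sbc"
    using \<open>x < y\<close> slope_sb2 by (simp only: affine[of y sc2 sbc] affine[of x sc2 sbc]) simp
  show "F_snow d \<theta> mub muc sb2 sc2 x < F_snow d \<theta> mub muc sb2 sc2 y"
    using \<open>x < y\<close> slope_sbc by (simp only: affine[of sb2 sc2 x] affine[of sb2 sc2 y]) simp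
qed

end
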